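(* Let $p,q$ be bivariate polynomials in $(n,N)$ with nonnegative integer coefficients, both of degree $k>1$, neither depending only on $N$, with decompositions as in the context, $P_k,Q_k$ non-constant and $Q_k(0)\le P_k(0)$. Suppose there are real constants $c,r$ such that $\gamma_k(y)=cy$ and $R_k(y)=r$ for all $y\in(0,1]$. Then either $q$ and $p$ have exploding differences, or $c$ and $r$ are rational, there is a constant $d$ such that $q(cn+r,N)-p(n,N)=d$ identically in $n,N$ (so $q,p$ are $\mathbb Q$-equivalent), and for every $\delta\in(0,1)$ there are $W_\delta>0$ and $N_\delta$ such that for all $N>N_\delta$, all integers $\delta N\le n\le N$ and all $m\in\mathbb N$: either $m=cn+r$ (and then $q(m,N)-p(n,N)=d$), or $|q(m,N)-p(n,N)|\ge W_\delta N^{k-1}$.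
   Context: For $p,q$ of degree $k$ write, with $y_1=n/N$, $y_2=m/N$: $p(n,N)=\sum_{j=0}^kN^jP_j(y_1)$ and $q(m,N)=\sum_{j=0}^kN^jQ_j(y_2)$ where $P_j,Q_j$ are polynomials of degree at most $j$. Define $\gamma_k=Q_k^{-1}\circ P_k$ on $[0,\infty)$ and $R_k(y)=\big(P_{k-1}(y)-Q_{k-1}(\gamma_k(y))\big)/Q_k'(\gamma_k(y))$. The degree of a bivariate polynomial $p(x,y)$ is the degree of $p(x,x)$. Exploding differences: $q,p$ have exploding differences if for every $\delta\in(0,1)$ there are $C_\delta>0$, $N_\delta$ and sets $\Gamma_{N,\delta}\subset[1,N]$ of cardinality at most $\delta N$ such that for all $N>N_\delta$ and all integers $n\in[\delta N,N]\setminus\Gamma_{N,\delta}$, $\min_{m\in[\delta N,N]\cap\mathbb N}|q(m,N)-p(n,N)|\ge C_\delta N$. Two polynomials $q,p$ are $\mathbb Q$-equivalent if there exist rationals $c,r$ such that $q(cn+r,N)-p(n,N)$ does not depend on $n$ and $N$. *)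

theory Defs
  imports Complex_Main "HOL-Computational_Algebra.Polynomial"
begin

text \<open>A bivariate polynomial with nonnegative integer coefficients in (n,N) is
represented by its coefficient function a, with a i l the coefficient of n^i N^l
(finite support assumed separately).\<close>

definition bsupp :: "(nat \<Rightarrow> nat \<Rightarrow> nat) \<Rightarrow> (nat \<times> nat) set" where
  "bsupp a = {(i,l). a i l \<noteq> 0}"

definition bpoly :: "(nat \<Rightarrow> nat \<Rightarrow> nat) \<Rightarrow> real \<Rightarrow> real \<Rightarrow> real" where
  "bpoly a x y = (\<Sum>(i,l)\<in>bsupp a. real (a i l) * x ^ i * y ^ l)"

text \<open>The univariate polynomial p(x,x); its degree is the degree of p.\<close>
definition bdiag :: "(nat \<Rightarrow> nat \<Rightarrow> nat) \<Rightarrow> int poly" where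
  "bdiag a = (\<Sum>(i,l)\<in>bsupp a. monom (int (a i l)) (i + l))"

definition bdeg :: "(nat \<Rightarrow> nat \<Rightarrow> nat) \<Rightarrow> nat" where
  "bdeg a = degree (bdiag a)"

text \<open>P_j with p(n,N) = sum_j N^j P_j(n/N).\<close>
definition hcomp :: "(nat \<Rightarrow> nat \<Rightarrow> nat) \<Rightarrow> nat \<Rightarrow> real poly" where
  "hcomp a j = (\<Sum>i\<le>j. monom (real (a i (j - i))) i)"

definition gam :: "(nat \<Rightarrow> nat \<Rightarrow> nat) \<Rightarrow> (nat \<Rightarrow> nat \<Rightarrow> nat) \<Rightarrow> nat \<Rightarrow> real \<Rightarrow> real" where
  "gam a b k y = the_inv_into {0..} (poly (hcomp b k)) (poly (hcomp a k) y)"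

definition Rk :: "(nat \<Rightarrow> nat \<Rightarrow> nat) \<Rightarrow> (nat \<Rightarrow> nat \<Rightarrow> nat) \<Rightarrow> nat \<Rightarrow> real \<Rightarrow> real" where
  "Rk a b k y = (poly (hcomp a (k - 1)) y - poly (hcomp b (k - 1)) (gam a b k y))
                 / poly (pderiv (hcomp b k)) (gam a b k y)"

definition exploding :: "(nat \<Rightarrow> nat \<Rightarrow> nat) \<Rightarrow> (nat \<Rightarrow> nat \<Rightarrow> nat) \<Rightarrow> bool" where
  "exploding b a \<longleftrightarrow>
    (\<forall>\<delta>::real. 0 < \<delta> \<and> \<delta> < 1 \<longrightarrow>
      (\<exists>C>0. \<exists>N0::nat. \<exists>\<Gamma>::nat \<Rightarrow> nat set.
        (\<forall>N. \<Gamma> N \<subseteq> {1..N} \<and> real (card (\<Gamma> N)) \<le> \<delta> * real N) \<and>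
        (\<forall>N>N0. \<forall>n::nat. \<delta> * real N \<le> real n \<and> n \<le> N \<and> n \<notin> \<Gamma> N \<longrightarrow>
           (\<forall>m::nat. \<delta> * real N \<le> real m \<and> m \<le> N \<longrightarrow>
              \<bar>bpoly b (real m) (real N) - bpoly a (real n) (real N)\<bar> \<ge> C * real N))))"

end

theory Submission
  imports Defs
begin

text \<open>Write \<open>D(x,N) = q(cx + r, N) - p(x, N)\<close>. Linearity of \<open>\<gamma>\<^sub>k\<close> means \<open>P\<^sub>k(y) = Q\<^sub>k(cy)\<close>
  and constancy of \<open>R\<^sub>k\<close> means \<open>P\<^sub>k\<^sub>-\<^sub>1(y) = Q\<^sub>k\<^sub>-\<^sub>1(cy) + r Q\<^sub>k'(cy)\<close>; these are exactly the
  vanishing of the coefficients of \<open>D\<close> of total degree \<open>k\<close> and \<open>k - 1\<close>, so \<open>D = O(N\<^sup>k\<^sup>-\<^sup>2)\<close>.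
  Since \<open>Q\<^sub>k\<close> has nonnegative coefficients, \<open>q(m,N) - q(cn + r, N)\<close> has size at least of
  order \<open>|m - (cn + r)| N\<^sup>k\<^sup>-\<^sup>1\<close> for \<open>n \<ge> \<delta>N\<close>, so only integers \<open>m\<close> very close to \<open>cn + r\<close>
  matter. If \<open>c\<close> is irrational, \<open>cn + r\<close> is close to an integer only for a sparse set of \<open>n\<close>;
  if \<open>c\<close> is rational and \<open>r\<close> is not, \<open>cn + r\<close> stays uniformly away from the integers; if
  both are rational, an integer \<open>m\<close> either equals \<open>cn + r\<close> or is uniformly far from it, and
  for \<open>m = cn + r\<close> the difference is \<open>D(n,N)\<close>, which is either constant (the
  \<open>\<rat>\<close>-equivalent case) or of size at least of order \<open>N\<close> outside the sparse set of \<open>n\<close>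
  where its leading homogeneous part \<open>N\<^sup>j h(n/N)\<close> is small.\<close>

lemma bsupp_total_degree_le:
  assumes fin: "finite (bsupp a)" and deg: "bdeg a = k" and nz: "a i l \<noteq> 0"
  shows "i + l \<le> k"
proof -
  have mem: "(i,l) \<in> bsupp a" using nz by (simp add: bsupp_def)
  have "coeff (bdiag a) (i+l) = (\<Sum>(i',l')\<in>bsupp a. if i' + l' = i + l then int (a i' l') else 0)"
    unfolding bdiag_def coeff_sum by (intro sum.cong) auto
  also have "\<dots> \<ge> int (a i l)"
    using member_le_sum[OF mem, of "\<lambda>(i',l'). if i' + l' = i + l then int (a i' l') else 0"] fin
    by (auto split: prod.splits)
  finally have "coeff (bdiag a) (i+l) \<noteq> 0" using nz by simp
  then have "i + l \<le> degree (bdiag a)" by (rule le_degree)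
  then show ?thesis using deg by (simp add: bdeg_def)
qed

lemma bpoly_eq_sum_atMost_degree:
  assumes fin: "finite (bsupp a)" and deg: "bdeg a = k"
  shows "bpoly a x y = (\<Sum>i\<le>k. \<Sum>l\<le>k. real (a i l) * x ^ i * y ^ l)"
proof -
  have "bsupp a \<subseteq> {..k} \<times> {..k}"
    using bsupp_total_degree_le[OF fin deg] by (fastforce simp: bsupp_def)
  then have "bpoly a x y = (\<Sum>(i,l)\<in>{..k} \<times> {..k}. real (a i l) * x ^ i * y ^ l)"
    unfolding bpoly_def by (intro sum.mono_neutral_left) (auto simp: bsupp_def)
  then show ?thesis by (simp add: sum.cartesian_product)
qed

lemma coeff_hcomp: "coeff (hcomp a j) s = (if s \<le> j then real (a s (j - s)) else 0)"
  unfolding hcomp_def coeff_sum coeff_monom by (auto simp: if_distrib cong: if_cong)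

lemma coeff_hcomp_nonneg: "coeff (hcomp a j) i \<ge> 0"
  by (simp add: coeff_hcomp)

lemma power_diff_ge:
  fixes u w :: real
  assumes "0 \<le> w" "w \<le> u"
  shows "(u - w) * u ^ i \<le> u ^ Suc i - w ^ Suc i"
proof (induction i)
  case 0 then show ?case by simp
next
  case (Suc i)
  have "u * ((u - w) * u ^ i) + 0 \<le> u * (u ^ Suc i - w ^ Suc i) + w ^ Suc i * (u - w)"
    using Suc assms by (intro add_mono mult_left_mono mult_nonneg_nonneg) auto
  also have "\<dots> = u ^ Suc (Suc i) - w ^ Suc (Suc i)" by (simp add: algebra_simps)
  finally show ?case by (simp add: algebra_simps)
qed

lemma abs_bpoly_diff_ge:
  assumes fin: "finite (bsupp b)" and "0 \<le> u" "0 \<le> w" "0 \<le> y" and "i \<ge> 1"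
  shows "real (b i l) * \<bar>u - w\<bar> * max u w ^ (i - 1) * y ^ l \<le> \<bar>bpoly b u y - bpoly b w y\<bar>"
proof -
  have ordered: "real (b i l) * (u - w) * u ^ (i - 1) * y ^ l \<le> bpoly b u y - bpoly b w y"
    if "0 \<le> w" "w \<le> u" for u w
  proof -
    have terms_nonneg: "0 \<le> real (b i' l') * (u ^ i' - w ^ i') * y ^ l'" for i' l'
      using that \<open>0 \<le> y\<close> by (auto intro!: mult_nonneg_nonneg power_mono)
    have "(u - w) * u ^ (i - 1) \<le> u ^ i - w ^ i"
      using power_diff_ge[OF that, of "i - 1"] \<open>i \<ge> 1\<close> by simp
    then have "real (b i l) * ((u - w) * u ^ (i - 1) * y ^ l) \<le> real (b i l) * ((u ^ i - w ^ i) * y ^ l)"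
      using \<open>0 \<le> y\<close> by (intro mult_left_mono mult_right_mono) auto
    then have "real (b i l) * (u - w) * u ^ (i - 1) * y ^ l \<le> real (b i l) * (u ^ i - w ^ i) * y ^ l"
      by (simp only: mult.assoc)
    also have "\<dots> \<le> (\<Sum>(i',l')\<in>bsupp b. real (b i' l') * (u ^ i' - w ^ i') * y ^ l')"
    proof (cases "b i l = 0")
      case False
      then show ?thesis using fin terms_nonneg
        by (intro member_le_sum[of "(i,l)" _ "\<lambda>(i',l'). _ i' l'", simplified]) (auto simp: bsupp_def)
    qed (auto intro!: sum_nonneg simp: terms_nonneg split: prod.splits)
    also have "\<dots> = bpoly b u y - bpoly b w y"
      unfolding bpoly_def sum_subtractf[symmetric] by (intro sum.cong) (auto simp: algebra_simps)
    finally show ?thesis .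
  qed
  show ?thesis
  proof (cases "w \<le> u")
    case True then show ?thesis using ordered[of w u] assms by (simp add: max_def)
  next
    case False then show ?thesis using ordered[of u w] assms by (simp add: max_def abs_minus_commute)
  qed
qed

lemma poly_eq_if_eq_on_infinite:
  fixes p q :: "real poly"
  assumes "infinite S" and "\<And>y. y \<in> S \<Longrightarrow> poly p y = poly q y"
  shows "p = q"
proof (rule ccontr)
  assume "p \<noteq> q"
  then have "finite {x. poly (p - q) x = 0}" by (intro poly_roots_finite) simp
  moreover have "S \<subseteq> {x. poly (p - q) x = 0}" using assms(2) by auto
  ultimately show False using assms(1) finite_subset by blast
qed

lemma poly_ge_coeff_term:
  fixes p :: "real poly"
  assumes nonneg: "\<And>j. coeff p j \<ge> 0" and "t \<ge> 0"
  shows "coeff p i * t ^ i \<le> poly p t"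
proof (cases "i \<le> degree p")
  case True
  then show ?thesis
    unfolding poly_altdef using nonneg \<open>t \<ge> 0\<close>
    by (intro member_le_sum[where f="\<lambda>j. coeff p j * t ^ j"]) auto
next
  case False
  then show ?thesis
    unfolding poly_altdef using nonneg \<open>t \<ge> 0\<close> by (simp add: coeff_eq_0 sum_nonneg)
qed

lemma poly_diff_ge_coeff_term:
  fixes p :: "real poly"
  assumes nonneg: "\<And>j. coeff p j \<ge> 0" and "0 \<le> w" "w \<le> u"
  shows "coeff p i * (u ^ i - w ^ i) \<le> poly p u - poly p w"
proof -
  have diff: "poly p u - poly p w = (\<Sum>j\<le>degree p. coeff p j * (u ^ j - w ^ j))"
    by (simp add: poly_altdef sum_subtractf[symmetric] algebra_simps)
  have "0 \<le> coeff p j * (u ^ j - w ^ j)" for j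
    using nonneg assms by (intro mult_nonneg_nonneg) (auto intro: power_mono)
  then show ?thesis
    unfolding diff
    by (cases "i \<le> degree p")
       (auto intro!: member_le_sum[where f="\<lambda>j. coeff p j * (u ^ j - w ^ j)"] sum_nonneg
             simp: coeff_eq_0)
qed

lemma poly_pderiv_pos:
  fixes p :: "real poly"
  assumes nonneg: "\<And>j. coeff p j \<ge> 0" and pos: "coeff p i > 0" "i \<ge> 1" and "t > 0"
  shows "poly (pderiv p) t > 0"
proof -
  have "0 < coeff (pderiv p) (i - 1) * t ^ (i - 1)"
    using pos \<open>t > 0\<close> by (simp add: coeff_pderiv)
  also have "\<dots> \<le> poly (pderiv p) t"
    using nonneg \<open>t > 0\<close> by (intro poly_ge_coeff_term) (auto simp: coeff_pderiv)
  finally show ?thesis .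
qed

lemma the_inv_into_poly_nonneg_coeffs:
  fixes p :: "real poly"
  assumes nonneg: "\<And>j. coeff p j \<ge> 0" and pos: "coeff p i > 0" "i \<ge> 1" and v: "poly p 0 \<le> v"
  shows "the_inv_into {0..} (poly p) v \<ge> 0 \<and> poly p (the_inv_into {0..} (poly p) v) = v"
proof -
  have strict_mono: "poly p w < poly p u" if "0 \<le> w" "w < u" for u w
  proof -
    have "0 < coeff p i * (u ^ i - w ^ i)"
      using pos that by (simp add: power_strict_mono)
    also have "\<dots> \<le> poly p u - poly p w"
      using poly_diff_ge_coeff_term[OF nonneg] that by simp
    finally show ?thesis by simp
  qed
  have inj: "inj_on (poly p) {0..}"
    by (rule inj_onI) (metis atLeast_iff linorder_neq_iff order_less_irrefl strict_mono)
  define T where "T = max 1 (v / coeff p i)"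
  have "v = coeff p i * (v / coeff p i)" using pos by simp
  also have "\<dots> \<le> coeff p i * T ^ 1" using pos by (intro mult_left_mono) (auto simp: T_def)
  also have "\<dots> \<le> coeff p i * T ^ i"
    using pos by (intro mult_left_mono power_increasing) (auto simp: T_def)
  also have "\<dots> \<le> poly p T" using nonneg by (intro poly_ge_coeff_term) (auto simp: T_def)
  finally have "v \<le> poly p T" .
  moreover have "continuous_on {0..T} (poly p)" by (intro continuous_intros)
  ultimately obtain x where "0 \<le> x" "poly p x = v"
    using IVT'[of "poly p" 0 v T] v by (force simp: T_def)
  then have "v \<in> poly p ` {0..}" by auto
  then show ?thesis using the_inv_into_into[OF inj] f_the_inv_into_f[OF inj] by auto
qed

lemma abs_sum_monomials_le:
  fixes g :: "nat \<Rightarrow> nat \<Rightarrow> real"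
  assumes "finite S" and deg: "\<And>s l. (s,l) \<in> S \<Longrightarrow> g s l \<noteq> 0 \<Longrightarrow> s + l \<le> J"
    and "\<bar>x\<bar> \<le> y" and "1 \<le> y"
  shows "\<bar>\<Sum>(s,l)\<in>S. g s l * x ^ s * y ^ l\<bar> \<le> (\<Sum>(s,l)\<in>S. \<bar>g s l\<bar>) * y ^ J"
proof -
  have term_le: "\<bar>g s l * x ^ s * y ^ l\<bar> \<le> \<bar>g s l\<bar> * y ^ J" if "(s,l) \<in> S" for s l
  proof (cases "g s l = 0")
    case False
    have "\<bar>x\<bar> ^ s * y ^ l \<le> y ^ s * y ^ l"
      using assms by (intro mult_right_mono power_mono) auto
    also have "\<dots> \<le> y ^ J"
      using deg[OF that False] \<open>1 \<le> y\<close> by (simp add: power_add[symmetric] power_increasing)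
    finally show ?thesis using \<open>1 \<le> y\<close>
      by (simp add: abs_mult power_abs mult.assoc mult_left_mono)
  qed simp
  have "\<bar>\<Sum>(s,l)\<in>S. g s l * x ^ s * y ^ l\<bar> \<le> (\<Sum>(s,l)\<in>S. \<bar>g s l * x ^ s * y ^ l\<bar>)"
    by (rule order_trans[OF sum_abs]) (simp add: case_prod_beta)
  also have "\<dots> \<le> (\<Sum>(s,l)\<in>S. \<bar>g s l\<bar> * y ^ J)"
    by (intro sum_mono) (auto simp: term_le)
  also have "\<dots> = (\<Sum>(s,l)\<in>S. \<bar>g s l\<bar>) * y ^ J"
    by (simp add: sum_distrib_right case_prod_beta)
  finally show ?thesis .
qed

lemma card_nat_near_le:
  fixes A :: "nat set"
  assumes "w \<ge> 0" and near: "\<And>n. n \<in> A \<Longrightarrow> \<bar>real n - t\<bar> < w"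
  shows "real (card A) \<le> 2 * w + 1"
proof (cases "A = {}")
  case False
  have "A \<subseteq> {..nat \<lceil>t + w\<rceil>}"
  proof
    fix n assume "n \<in> A"
    then have "real n \<le> real (nat \<lceil>t + w\<rceil>)" using near[of n] by linarith
    then show "n \<in> {..nat \<lceil>t + w\<rceil>}" by simp
  qed
  then have fin: "finite A" by (rule finite_subset) simp
  have "card A \<le> card {Min A..Max A}" using fin by (intro card_mono) auto
  moreover have "Min A \<le> Max A" using fin False by simp
  ultimately have "real (card A) \<le> real (Max A) + 1 - real (Min A)" by simp
  moreover have "\<bar>real (Max A) - t\<bar> < w" "\<bar>real (Min A) - t\<bar> < w"
    using near fin False by auto
  ultimately show ?thesis by linarith
qed (use assms in simp)

lemma card_le_if_spaced:
  fixes A :: "nat set"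
  assumes sub: "A \<subseteq> {1..N}" and spaced: "\<And>x y. x \<in> A \<Longrightarrow> y \<in> A \<Longrightarrow> x < y \<Longrightarrow> L < y - x"
  shows "card A \<le> N div Suc L + 1"
proof -
  have close: "y - x < Suc L" if "x div Suc L = y div Suc L" "x < y" for x y
  proof -
    have "x = Suc L * (y div Suc L) + x mod Suc L" "y = Suc L * (y div Suc L) + y mod Suc L"
      using that(1) by (metis div_mult_mod_eq mult.commute)+
    then show ?thesis using that(2) mod_less_divisor[of "Suc L" y] by linarith
  qed
  have inj: "inj_on (\<lambda>n. n div Suc L) A"
  proof (rule inj_onI, rule ccontr)
    fix x y assume xy: "x \<in> A" "y \<in> A" "x div Suc L = y div Suc L" "x \<noteq> y"
    show False
      using close[of x y] close[of y x] spaced[of x y] spaced[of y x] xy by (cases "x < y") auto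
  qed
  have "n div Suc L \<le> N div Suc L" if "n \<in> A" for n
    using sub that by (intro div_le_mono) auto
  then have "card ((\<lambda>n. n div Suc L) ` A) \<le> card {..N div Suc L}" by (intro card_mono) auto
  then show ?thesis using card_image[OF inj] by simp
qed

lemma poly_bounded_below_off_roots:
  fixes h :: "real poly"
  assumes "h \<noteq> 0" and "\<eta> > 0"
  obtains \<epsilon> where "\<epsilon> > 0"
    and "\<forall>y\<in>{0..1}. (\<forall>z. poly h z = 0 \<longrightarrow> \<eta> \<le> \<bar>y - z\<bar>) \<longrightarrow> \<epsilon> \<le> \<bar>poly h y\<bar>"
proof -
  define S where "S = {0..1::real} \<inter> (\<Inter>z\<in>{z. poly h z = 0}. {y. \<eta> \<le> \<bar>y - z\<bar>})"
  have "compact S" unfolding S_def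
    by (intro compact_Int_closed compact_Icc closed_INT ballI closed_Collect_le continuous_intros)
  show ?thesis
  proof (cases "S = {}")
    case True
    show ?thesis
    proof (rule that[of 1])
      show "\<forall>y\<in>{0..1}. (\<forall>z. poly h z = 0 \<longrightarrow> \<eta> \<le> \<bar>y - z\<bar>) \<longrightarrow> 1 \<le> \<bar>poly h y\<bar>"
      proof (intro ballI impI)
        fix y assume "y \<in> {0..1}" "\<forall>z. poly h z = 0 \<longrightarrow> \<eta> \<le> \<bar>y - z\<bar>"
        then have "y \<in> S" by (auto simp: S_def)
        with True show "1 \<le> \<bar>poly h y\<bar>" by simp
      qed
    qed simp
  next
    case False
    have "continuous_on S (\<lambda>y. \<bar>poly h y\<bar>)" by (intro continuous_intros)
    then obtain y0 where y0: "y0 \<in> S" "\<And>y. y \<in> S \<Longrightarrow> \<bar>poly h y0\<bar> \<le> \<bar>poly h y\<bar>"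
      using continuous_attains_inf[OF \<open>compact S\<close> False] by blast
    then have "poly h y0 \<noteq> 0" using \<open>\<eta> > 0\<close> by (force simp: S_def)
    show ?thesis
    proof (rule that[of "\<bar>poly h y0\<bar>"])
      show "\<forall>y\<in>{0..1}. (\<forall>z. poly h z = 0 \<longrightarrow> \<eta> \<le> \<bar>y - z\<bar>) \<longrightarrow> \<bar>poly h y0\<bar> \<le> \<bar>poly h y\<bar>"
      proof (intro ballI impI)
        fix y assume "y \<in> {0..1}" "\<forall>z. poly h z = 0 \<longrightarrow> \<eta> \<le> \<bar>y - z\<bar>"
        then have "y \<in> S" by (auto simp: S_def)
        then show "\<bar>poly h y0\<bar> \<le> \<bar>poly h y\<bar>" by (rule y0(2))
      qed
    qed (use \<open>poly h y0 \<noteq> 0\<close> in simp)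
  qed
qed

lemma card_near_scaled_points_le:
  fixes Z :: "real set"
  assumes "finite Z" and "\<eta> > 0"
  shows "real (card {n\<in>{1..N}. \<exists>z\<in>Z. \<bar>real n - z * real N\<bar> < \<eta> * real N})
           \<le> real (card Z) * (2 * (\<eta> * real N) + 1)"
proof -
  define C where "C z = {n\<in>{1..N}. \<bar>real n - z * real N\<bar> < \<eta> * real N}" for z
  have "{n\<in>{1..N}. \<exists>z\<in>Z. \<bar>real n - z * real N\<bar> < \<eta> * real N} = (\<Union>z\<in>Z. C z)"
    by (auto simp: C_def)
  moreover have "card (\<Union>z\<in>Z. C z) \<le> (\<Sum>z\<in>Z. card (C z))" by (rule card_UN_le[OF \<open>finite Z\<close>])
  ultimately have "real (card {n\<in>{1..N}. \<exists>z\<in>Z. \<bar>real n - z * real N\<bar> < \<eta> * real N})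
      \<le> (\<Sum>z\<in>Z. real (card (C z)))"
    by (simp flip: of_nat_sum)
  also have "\<dots> \<le> (\<Sum>z\<in>Z. 2 * (\<eta> * real N) + 1)"
    using \<open>\<eta> > 0\<close> by (intro sum_mono card_nat_near_le) (auto simp: C_def)
  finally show ?thesis by simp
qed

text \<open>A nonzero polynomial is small only near its finitely many roots, and near each root
  there are at most about \<open>2\<eta>N\<close> of the points \<open>n/N\<close>.\<close>
lemma card_small_poly_values_le:
  fixes h :: "real poly"
  assumes "h \<noteq> 0" and "\<delta> > 0"
  obtains \<epsilon> N1 where "\<epsilon> > 0"
    and "\<And>N. N \<ge> N1 \<Longrightarrow> real (card {n\<in>{1..N}. \<bar>poly h (real n / real N)\<bar> < \<epsilon>}) \<le> \<delta> * real N"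
proof -
  define Z where "Z = {z. poly h z = 0}"
  have "finite Z" using poly_roots_finite[OF \<open>h \<noteq> 0\<close>] by (simp add: Z_def)
  define \<eta> where "\<eta> = \<delta> / (4 * (real (card Z) + 1))"
  have "\<eta> > 0" using \<open>\<delta> > 0\<close> by (simp add: \<eta>_def)
  obtain \<epsilon> where "\<epsilon> > 0"
    and away: "\<forall>y\<in>{0..1}. (\<forall>z. poly h z = 0 \<longrightarrow> \<eta> \<le> \<bar>y - z\<bar>) \<longrightarrow> \<epsilon> \<le> \<bar>poly h y\<bar>"
    by (rule poly_bounded_below_off_roots[OF \<open>h \<noteq> 0\<close> \<open>\<eta> > 0\<close>])
  have "real (card {n\<in>{1..N}. \<bar>poly h (real n / real N)\<bar> < \<epsilon>}) \<le> \<delta> * real N"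
    if N: "N \<ge> nat \<lceil>2 * real (card Z) / \<delta>\<rceil> + 1" for N
  proof -
    have "real N > 0" using N by simp
    have "{n\<in>{1..N}. \<bar>poly h (real n / real N)\<bar> < \<epsilon>}
        \<subseteq> {n\<in>{1..N}. \<exists>z\<in>Z. \<bar>real n - z * real N\<bar> < \<eta> * real N}"
    proof safe
      fix n assume n: "n \<in> {1..N}" "\<bar>poly h (real n / real N)\<bar> < \<epsilon>"
      then have "real n / real N \<in> {0..1}" by auto
      then have "\<not> (\<forall>z. poly h z = 0 \<longrightarrow> \<eta> \<le> \<bar>real n / real N - z\<bar>)" using away n by force
      then obtain z where "z \<in> Z" "\<bar>real n / real N - z\<bar> < \<eta>" by (auto simp: Z_def not_le)
      moreover have "\<bar>real n - z * real N\<bar> = \<bar>real n / real N - z\<bar> * real N"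
        using \<open>real N > 0\<close> by (simp add: abs_mult[symmetric] field_simps)
      ultimately have "\<bar>real n - z * real N\<bar> < \<eta> * real N"
        using \<open>real N > 0\<close> by (simp add: mult_strict_right_mono)
      then show "\<exists>z\<in>Z. \<bar>real n - z * real N\<bar> < \<eta> * real N" using \<open>z \<in> Z\<close> by blast
    qed
    then have "real (card {n\<in>{1..N}. \<bar>poly h (real n / real N)\<bar> < \<epsilon>})
        \<le> real (card {n\<in>{1..N}. \<exists>z\<in>Z. \<bar>real n - z * real N\<bar> < \<eta> * real N})"
      by (intro of_nat_mono card_mono) auto
    also have "\<dots> \<le> real (card Z) * (2 * (\<eta> * real N) + 1)"
      by (rule card_near_scaled_points_le[OF \<open>finite Z\<close> \<open>\<eta> > 0\<close>])
    also have "\<dots> = real (card Z) / (real (card Z) + 1) * (\<delta> * real N / 2) + real (card Z)"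
      by (simp add: \<eta>_def field_simps)
    also have "\<dots> \<le> \<delta> * real N / 2 + real (card Z)"
      using \<open>\<delta> > 0\<close> by (intro add_right_mono mult_left_le_one_le) auto
    also have "\<dots> \<le> \<delta> * real N"
    proof -
      have "real (nat \<lceil>2 * real (card Z) / \<delta>\<rceil> + 1) \<le> real N" using N by (simp only: of_nat_le_iff)
      then have "2 * real (card Z) / \<delta> \<le> real N"
        using real_nat_ceiling_ge[of "2 * real (card Z) / \<delta>"] by linarith
      then show ?thesis using \<open>\<delta> > 0\<close> by (simp add: pos_divide_le_eq mult.commute)
    qed
    finally show ?thesis .
  qed
  then show ?thesis using that \<open>\<epsilon> > 0\<close> by blast
qed

lemma card_near_int_irrational_le:
  fixes c r \<delta> :: real
  assumes "c \<notin> \<rat>" and "\<delta> > 0"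
  obtains \<epsilon> N1 where "\<epsilon> > 0"
    and "\<And>N. N \<ge> N1 \<Longrightarrow>
           real (card {n\<in>{1..N}. \<exists>m::int. \<bar>c * real n + r - of_int m\<bar> < \<epsilon>}) \<le> \<delta> * real N"
proof -
  define L where "L = nat \<lceil>2 / \<delta>\<rceil>"
  have "0 < \<lceil>2 / \<delta>\<rceil>" using \<open>\<delta> > 0\<close> by simp
  then have "L \<ge> 1" unfolding L_def by linarith
  have L_bound: "2 / \<delta> \<le> real L" unfolding L_def by linarith
  define f where "f h = \<bar>c * real h - of_int (round (c * real h))\<bar>" for h :: nat
  have f_pos: "f h > 0" if "h \<ge> 1" for h
  proof (rule ccontr)
    assume "\<not> f h > 0"
    then have "c = of_int (round (c * real h)) / real h" using that by (simp add: f_def field_simps)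
    then show False using \<open>c \<notin> \<rat>\<close> by (metis Rats_divide Rats_of_int Rats_of_nat)
  qed
  define \<epsilon> where "\<epsilon> = Min (f ` {1..L}) / 2"
  have "\<epsilon> > 0" using f_pos \<open>L \<ge> 1\<close> by (simp add: \<epsilon>_def)
  have f_ge: "2 * \<epsilon> \<le> f h" if "1 \<le> h" "h \<le> L" for h
    using that by (simp add: \<epsilon>_def)
  have "real (card {n\<in>{1..N}. \<exists>m::int. \<bar>c * real n + r - of_int m\<bar> < \<epsilon>}) \<le> \<delta> * real N"
    if N: "N \<ge> L" for N
  proof -
    define B where "B = {n\<in>{1..N}. \<exists>m::int. \<bar>c * real n + r - of_int m\<bar> < \<epsilon>}"
    have spaced: "L < y - x" if "x \<in> B" "y \<in> B" "x < y" for x y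
    proof -
      obtain m1 :: int where "\<bar>c * real x + r - m1\<bar> < \<epsilon>" using \<open>x \<in> B\<close> by (auto simp: B_def)
      moreover obtain m2 :: int where "\<bar>c * real y + r - m2\<bar> < \<epsilon>" using \<open>y \<in> B\<close> by (auto simp: B_def)
      ultimately have "\<bar>c * real (y - x) - of_int (m2 - m1)\<bar> < 2 * \<epsilon>"
        using \<open>x < y\<close> by (simp add: of_nat_diff algebra_simps)
      moreover have "f (y - x) \<le> \<bar>c * real (y - x) - of_int (m2 - m1)\<bar>"
        unfolding f_def by (rule round_diff_minimal)
      ultimately show ?thesis using f_ge[of "y - x"] \<open>x < y\<close> by force
    qed
    have "card B \<le> N div Suc L + 1" by (rule card_le_if_spaced[OF _ spaced]) (auto simp: B_def)
    moreover have "real (N div Suc L) \<le> real N / real (Suc L)" by (rule of_nat_div_le_of_nat)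
    moreover have "real N / real (Suc L) \<le> real N / (2 / \<delta>)"
      using L_bound \<open>\<delta> > 0\<close> by (intro divide_left_mono) auto
    moreover have "real N / (2 / \<delta>) = \<delta> * real N / 2" by simp
    moreover have "2 / \<delta> \<le> real N" using L_bound N by (meson of_nat_le_iff order_trans)
    then have "2 \<le> \<delta> * real N" using \<open>\<delta> > 0\<close> by (simp add: pos_divide_le_eq mult.commute)
    ultimately show ?thesis unfolding B_def by linarith
  qed
  then show ?thesis using that \<open>\<epsilon> > 0\<close> by blast
qed

lemma far_from_int_rational_irrational:
  fixes c r :: real
  assumes "c \<in> \<rat>" and "r \<notin> \<rat>"
  obtains \<epsilon> where "\<epsilon> > 0" and "\<And>n::nat. \<And>m::int. \<epsilon> \<le> \<bar>c * real n + r - of_int m\<bar>"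
proof -
  obtain u v :: int where "v > 0" and c: "c = of_int u / of_int v"
    using \<open>c \<in> \<rat>\<close> by (rule Rats_cases') auto
  define g where "g = \<bar>of_int v * r - of_int (round (of_int v * r))\<bar>"
  have "g > 0"
  proof (rule ccontr)
    assume "\<not> g > 0"
    then have "r = of_int (round (of_int v * r)) / of_int v" using \<open>v > 0\<close> by (simp add: g_def field_simps)
    then show False using \<open>r \<notin> \<rat>\<close> by (metis Rats_divide Rats_of_int)
  qed
  have "g / of_int v \<le> \<bar>c * real n + r - of_int m\<bar>" for n :: nat and m :: int
  proof -
    have "g \<le> \<bar>of_int v * r - of_int (v * m - u * int n)\<bar>" unfolding g_def by (rule round_diff_minimal)
    also have "\<dots> = of_int v * \<bar>c * real n + r - of_int m\<bar>"
      using \<open>v > 0\<close> by (simp add: c abs_mult[symmetric] field_simps)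
    finally show ?thesis using \<open>v > 0\<close> by (simp add: field_simps)
  qed
  then show ?thesis using that[of "g / of_int v"] \<open>g > 0\<close> \<open>v > 0\<close> by simp
qed

lemma int_gap_rational_affine:
  fixes c r :: real
  assumes "c \<in> \<rat>" and "r \<in> \<rat>"
  obtains \<epsilon> where "\<epsilon> > 0"
    and "\<And>n::nat. \<And>m::int. of_int m = c * real n + r \<or> \<epsilon> \<le> \<bar>c * real n + r - of_int m\<bar>"
proof -
  obtain u v :: int where "v > 0" and c: "c = of_int u / of_int v"
    using \<open>c \<in> \<rat>\<close> by (rule Rats_cases') auto
  obtain s t :: int where "t > 0" and r: "r = of_int s / of_int t"
    using \<open>r \<in> \<rat>\<close> by (rule Rats_cases') auto
  have "of_int m = c * real n + r \<or> 1 / (of_int v * of_int t) \<le> \<bar>c * real n + r - of_int m\<bar>"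
    for n :: nat and m :: int
  proof -
    define z where "z = u * t * int n + s * v - v * t * m"
    have z: "of_int z = of_int v * of_int t * (c * real n + r - of_int m)"
      using \<open>v > 0\<close> \<open>t > 0\<close> by (simp add: z_def c r field_simps)
    show ?thesis
    proof (cases "z = 0")
      case True
      then show ?thesis using z \<open>v > 0\<close> \<open>t > 0\<close> by simp
    next
      case False
      then have "1 \<le> \<bar>real_of_int z\<bar>" by linarith
      then have "1 \<le> of_int v * of_int t * \<bar>c * real n + r - of_int m\<bar>"
        using z \<open>v > 0\<close> \<open>t > 0\<close> by (simp add: abs_mult)
      then show ?thesis using \<open>v > 0\<close> \<open>t > 0\<close> by (simp add: field_simps)
    qed
  qed
  then show ?thesis using that[of "1 / (of_int v * of_int t)"] \<open>v > 0\<close> \<open>t > 0\<close> by simp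
qed

lemma leading_homogeneous_part:
  fixes g :: "nat \<Rightarrow> nat \<Rightarrow> real"
  assumes "finite S" and nonconst: "(s1,l1) \<in> S" "(s1,l1) \<noteq> (0,0)" "g s1 l1 \<noteq> 0"
  obtains h :: "real poly" and j M where "h \<noteq> 0" and "j \<ge> 1" and "M \<ge> 0"
    and "\<And>x y. \<bar>x\<bar> \<le> y \<Longrightarrow> 1 \<le> y \<Longrightarrow>
           \<bar>(\<Sum>(s,l)\<in>S. g s l * x ^ s * y ^ l) - y ^ j * poly h (x / y)\<bar> \<le> M * y ^ (j - 1)"
proof -
  define E where "E = {(s,l)\<in>S. g s l \<noteq> 0}"
  have "finite E" unfolding E_def by (rule finite_subset[OF _ \<open>finite S\<close>]) auto
  have "(s1,l1) \<in> E" using nonconst by (simp add: E_def)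
  define j where "j = Max ((\<lambda>(s,l). s + l) ` E)"
  have j_ge: "s + l \<le> j" if "(s,l) \<in> E" for s l
    unfolding j_def using \<open>finite E\<close> that by (intro Max_ge) force+
  have "j \<ge> 1" using j_ge[OF \<open>(s1,l1) \<in> E\<close>] nonconst(2) by auto
  have "j \<in> (\<lambda>(s,l). s + l) ` E"
    unfolding j_def using \<open>finite E\<close> \<open>(s1,l1) \<in> E\<close> by (intro Max_in) auto
  then obtain s0 l0 where top: "(s0,l0) \<in> E" "s0 + l0 = j" by auto
  define S1 where "S1 = {(s,l)\<in>S. s + l = j}"
  define h where "h = (\<Sum>(s,l)\<in>S1. monom (g s l) s)"
  have "finite S1" unfolding S1_def by (rule finite_subset[OF _ \<open>finite S\<close>]) auto
  have "coeff h s0 = (\<Sum>p\<in>S1. if p = (s0,l0) then g s0 l0 else 0)"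
    unfolding h_def coeff_sum
    by (intro sum.cong) (use top in \<open>auto simp: S1_def coeff_monom split: if_splits\<close>)
  also have "\<dots> = g s0 l0" using top \<open>finite S1\<close> by (simp add: S1_def E_def)
  finally have "h \<noteq> 0" using top by (auto simp: E_def)
  have "\<bar>(\<Sum>(s,l)\<in>S. g s l * x ^ s * y ^ l) - y ^ j * poly h (x / y)\<bar>
          \<le> (\<Sum>(s,l)\<in>S - S1. \<bar>g s l\<bar>) * y ^ (j - 1)"
    if "\<bar>x\<bar> \<le> y" "1 \<le> y" for x y :: real
  proof -
    have "y ^ j * poly h (x / y) = (\<Sum>(s,l)\<in>S1. g s l * x ^ s * y ^ l)"
      unfolding h_def poly_sum sum_distrib_left
    proof (intro sum.cong refl, clarify)
      fix s l assume "(s,l) \<in> S1"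
      then have "y ^ j = y ^ s * y ^ l" by (simp add: S1_def power_add[symmetric])
      then show "y ^ j * poly (monom (g s l) s) (x / y) = g s l * x ^ s * y ^ l"
        using \<open>1 \<le> y\<close> by (simp add: poly_monom power_divide)
    qed
    moreover have "(\<Sum>(s,l)\<in>S. g s l * x ^ s * y ^ l)
        = (\<Sum>(s,l)\<in>S1. g s l * x ^ s * y ^ l) + (\<Sum>(s,l)\<in>S - S1. g s l * x ^ s * y ^ l)"
      using sum.subset_diff[of S1 S] \<open>finite S\<close> by (auto simp: S1_def add.commute)
    moreover have "s + l \<le> j - 1" if "(s,l) \<in> S - S1" "g s l \<noteq> 0" for s l
      using that j_ge[of s l] by (force simp: S1_def E_def)
    then have "\<bar>\<Sum>(s,l)\<in>S - S1. g s l * x ^ s * y ^ l\<bar> \<le> (\<Sum>(s,l)\<in>S - S1. \<bar>g s l\<bar>) * y ^ (j - 1)"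
      using \<open>finite S\<close> that by (intro abs_sum_monomials_le) auto
    ultimately show ?thesis by simp
  qed
  moreover have "(\<Sum>(s,l)\<in>S - S1. \<bar>g s l\<bar>) \<ge> 0"
    by (intro sum_nonneg) (simp add: case_prod_beta)
  ultimately show ?thesis using that \<open>h \<noteq> 0\<close> \<open>j \<ge> 1\<close> by blast
qed

lemma abs_ge_if_leading_term_dominates:
  fixes F H M y \<epsilon> :: real
  assumes close: "\<bar>F - y ^ j * H\<bar> \<le> M * y ^ (j - 1)" and "\<epsilon> \<le> \<bar>H\<bar>"
    and "j \<ge> 1" "1 \<le> y" "0 \<le> M" "2 * M \<le> \<epsilon> * y"
  shows "\<epsilon> / 2 * y \<le> \<bar>F\<bar>"
proof -
  have "y ^ j = y * y ^ (j - 1)" using \<open>j \<ge> 1\<close> by (simp add: power_eq_if)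
  then have "\<epsilon> * y * y ^ (j - 1) \<le> \<bar>y ^ j * H\<bar>"
    using \<open>\<epsilon> \<le> \<bar>H\<bar>\<close> \<open>1 \<le> y\<close> by (simp add: abs_mult mult_ac mult_left_mono)
  moreover have "(\<epsilon> / 2 * y) * 1 \<le> (\<epsilon> * y - M) * y ^ (j - 1)"
    using assms by (intro mult_mono) auto
  ultimately show ?thesis using close by (simp add: left_diff_distrib)
qed

lemma sparse_family_of_card_le:
  assumes "\<And>N. N \<ge> N1 \<Longrightarrow> real (card {n\<in>{1..N}. B N n}) \<le> \<delta> * real N" and "\<delta> \<ge> 0"
  obtains \<Gamma> :: "nat \<Rightarrow> nat set"
  where "\<And>N. \<Gamma> N \<subseteq> {1..N} \<and> real (card (\<Gamma> N)) \<le> \<delta> * real N"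
    and "\<And>N n. N \<ge> N1 \<Longrightarrow> n \<in> {1..N} \<Longrightarrow> n \<notin> \<Gamma> N \<Longrightarrow> \<not> B N n"
proof (rule that[of "\<lambda>N. if N \<ge> N1 then {n\<in>{1..N}. B N n} else {}"])
  fix N
  show "(if N \<ge> N1 then {n\<in>{1..N}. B N n} else {}) \<subseteq> {1..N} \<and>
        real (card (if N \<ge> N1 then {n\<in>{1..N}. B N n} else {})) \<le> \<delta> * real N"
    using assms by auto
qed auto

locale linear_gamma =
  fixes a b :: "nat \<Rightarrow> nat \<Rightarrow> nat" and k :: nat and c r :: real
  assumes fin_p: "finite (bsupp a)" and fin_q: "finite (bsupp b)"
    and k_gt_1: "k > 1" and deg_p: "bdeg a = k" and deg_q: "bdeg b = k"
    and Pk_nonconst: "degree (hcomp a k) > 0" and Qk_nonconst: "degree (hcomp b k) > 0"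
    and Qk_0_le_Pk_0: "poly (hcomp b k) 0 \<le> poly (hcomp a k) 0"
    and gam_linear: "\<And>y. 0 < y \<Longrightarrow> y \<le> 1 \<Longrightarrow> gam a b k y = c * y"
    and Rk_const: "\<And>y. 0 < y \<Longrightarrow> y \<le> 1 \<Longrightarrow> Rk a b k y = r"
begin

lemma Qk_lead_coeff:
  obtains i where "1 \<le> i" "i \<le> k" "b i (k - i) \<noteq> 0" "coeff (hcomp b k) i > 0"
proof -
  let ?i = "degree (hcomp b k)"
  have "coeff (hcomp b k) ?i \<noteq> 0" using Qk_nonconst by (intro leading_coeff_neq_0) auto
  then have "?i \<le> k" "b ?i (k - ?i) \<noteq> 0" by (auto simp: coeff_hcomp split: if_splits)
  then show ?thesis using that[of ?i] Qk_nonconst by (simp add: coeff_hcomp)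
qed

lemma Qk_gam:
  assumes "0 \<le> y"
  shows "0 \<le> gam a b k y \<and> poly (hcomp b k) (gam a b k y) = poly (hcomp a k) y"
proof -
  obtain i where "1 \<le> i" "coeff (hcomp b k) i > 0" by (rule Qk_lead_coeff)
  have "poly (hcomp a k) 0 \<le> poly (hcomp a k) y"
    using poly_diff_ge_coeff_term[where p="hcomp a k" and w=0 and u=y and i=0] assms
    by (simp add: coeff_hcomp_nonneg)
  with Qk_0_le_Pk_0 show ?thesis
    unfolding gam_def using \<open>1 \<le> i\<close> \<open>coeff (hcomp b k) i > 0\<close>
    by (intro the_inv_into_poly_nonneg_coeffs[OF coeff_hcomp_nonneg]) auto
qed

lemma Pk_eq_Qk_scaled: "hcomp a k = pcompose (hcomp b k) [:0, c:]"
proof (rule poly_eq_if_eq_on_infinite[of "{0<..1}"])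
  fix y :: real assume "y \<in> {0<..1}"
  then show "poly (hcomp a k) y = poly (pcompose (hcomp b k) [:0, c:]) y"
    using Qk_gam[of y] gam_linear[of y] by (simp add: poly_pcompose mult.commute)
qed simp

lemma c_pos: "c > 0"
proof -
  have "0 \<le> c" using Qk_gam[of 1] gam_linear[of 1] by simp
  moreover have "c \<noteq> 0"
  proof
    assume "c = 0"
    then have "degree (hcomp a k) = 0" using Pk_eq_Qk_scaled by (simp add: degree_pcompose)
    with Pk_nonconst show False by simp
  qed
  ultimately show ?thesis by simp
qed

lemma Pk1_eq:
  "hcomp a (k - 1) =
     pcompose (hcomp b (k - 1)) [:0, c:] + smult r (pcompose (pderiv (hcomp b k)) [:0, c:])"
proof (rule poly_eq_if_eq_on_infinite[of "{0<..1}"])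
  fix y :: real assume y: "y \<in> {0<..1}"
  obtain i where "1 \<le> i" "coeff (hcomp b k) i > 0" by (rule Qk_lead_coeff)
  then have "poly (pderiv (hcomp b k)) (c * y) > 0"
    using c_pos y by (intro poly_pderiv_pos[OF coeff_hcomp_nonneg]) auto
  moreover have "(poly (hcomp a (k - 1)) y - poly (hcomp b (k - 1)) (c * y))
                   / poly (pderiv (hcomp b k)) (c * y) = r"
    using Rk_const[of y] gam_linear[of y] y by (simp add: Rk_def)
  ultimately have "poly (hcomp a (k - 1)) y
      = poly (hcomp b (k - 1)) (c * y) + r * poly (pderiv (hcomp b k)) (c * y)"
    by (simp add: field_simps)
  then show "poly (hcomp a (k - 1)) y = poly (pcompose (hcomp b (k - 1)) [:0, c:]
      + smult r (pcompose (pderiv (hcomp b k)) [:0, c:])) y"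
    by (simp add: poly_pcompose mult.commute)
qed simp

lemma top_coeffs: "s \<le> k \<Longrightarrow> real (a s (k - s)) = real (b s (k - s)) * c ^ s"
  using arg_cong[OF Pk_eq_Qk_scaled, of "\<lambda>p. coeff p s"]
  by (simp add: coeff_hcomp coeff_pcompose_linear mult.commute)

lemma next_coeffs:
  assumes "s \<le> k - 1"
  shows "real (a s (k - 1 - s)) = real (b s (k - 1 - s)) * c ^ s
           + r * real (Suc s) * real (b (Suc s) (k - 1 - s)) * c ^ s"
proof -
  have "Suc s \<le> k" "k - Suc s = k - 1 - s" using assms k_gt_1 by auto
  then show ?thesis
    using arg_cong[OF Pk1_eq, of "\<lambda>p. coeff p s"] assms
    by (simp add: coeff_hcomp coeff_pcompose_linear coeff_pderiv algebra_simps)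
qed

definition shift_diff :: "real \<Rightarrow> real \<Rightarrow> real" where
  "shift_diff x y = bpoly b (c * x + r) y - bpoly a x y"

definition shift_coeff :: "nat \<Rightarrow> nat \<Rightarrow> real" where
  "shift_coeff s l = (\<Sum>i\<le>k. real (b i l) * real (i choose s) * c ^ s * r ^ (i - s)) - real (a s l)"

lemma shift_diff_expansion:
  "shift_diff x y = (\<Sum>s\<le>k. \<Sum>l\<le>k. shift_coeff s l * x ^ s * y ^ l)"
proof -
  define F where "F i l s = real (b i l) * real (i choose s) * c ^ s * r ^ (i - s) * x ^ s * y ^ l"
    for i l s
  have binomial: "(c * x + r) ^ i = (\<Sum>s\<le>k. real (i choose s) * (c * x) ^ s * r ^ (i - s))"
    if "i \<le> k" for i
    unfolding binomial_ring by (rule sum.mono_neutral_left) (use that in auto)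
  have "bpoly b (c * x + r) y = (\<Sum>i\<le>k. \<Sum>l\<le>k. \<Sum>s\<le>k. F i l s)"
    unfolding bpoly_eq_sum_atMost_degree[OF fin_q deg_q] F_def
    by (intro sum.cong refl)
       (simp add: binomial sum_distrib_left sum_distrib_right power_mult_distrib mult_ac)
  also have "\<dots> = (\<Sum>i\<le>k. \<Sum>s\<le>k. \<Sum>l\<le>k. F i l s)" by (intro sum.cong refl sum.swap)
  also have "\<dots> = (\<Sum>s\<le>k. \<Sum>i\<le>k. \<Sum>l\<le>k. F i l s)" by (rule sum.swap)
  also have "\<dots> = (\<Sum>s\<le>k. \<Sum>l\<le>k. \<Sum>i\<le>k. F i l s)" by (intro sum.cong refl sum.swap)
  finally show ?thesis
    unfolding shift_diff_def shift_coeff_def bpoly_eq_sum_atMost_degree[OF fin_p deg_p] F_def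
    by (simp add: sum_subtractf[symmetric] sum_distrib_right left_diff_distrib)
qed

lemma shift_coeff_eq_0:
  assumes "k - 1 \<le> s + l"
  shows "shift_coeff s l = 0"
proof -
  have sa: "a i l' = 0" if "k < i + l'" for i l'
    using bsupp_total_degree_le[OF fin_p deg_p, of i l'] that by linarith
  have sb: "b i l' = 0" if "k < i + l'" for i l'
    using bsupp_total_degree_le[OF fin_q deg_q, of i l'] that by linarith
  define f where "f i = real (b i l) * real (i choose s) * c ^ s * r ^ (i - s)" for i
  have f_0: "f i = 0" if "i \<noteq> s" "i \<noteq> Suc s" for i
    using sb[of i l] assms that by (cases "i < s") (auto simp: f_def)
  consider "k < s + l" | "s + l = k" | "s + l = k - 1" using assms by linarith
  then have "(\<Sum>i\<le>k. f i) = real (a s l)"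
  proof cases
    case 1
    then show ?thesis using sa[of s l] sb[of _ l] by (auto simp: f_def intro!: sum.neutral)
  next
    case 2
    have "f (Suc s) = 0" using sb[of "Suc s" l] 2 by (simp add: f_def)
    then have "f i = 0" if "i \<noteq> s" for i using f_0[OF that] by (cases "i = Suc s") auto
    then have "(\<Sum>i\<le>k. f i) = (\<Sum>i\<in>{s}. f i)"
      using 2 by (intro sum.mono_neutral_right) auto
    moreover have "s \<le> k" "l = k - s" using 2 by auto
    ultimately show ?thesis using top_coeffs[of s] by (simp add: f_def)
  next
    case 3
    then have "Suc s \<le> k" "s \<le> k - 1" "l = k - 1 - s" using k_gt_1 by auto
    then have "(\<Sum>i\<le>k. f i) = (\<Sum>i\<in>{s, Suc s}. f i)"
      using f_0 by (intro sum.mono_neutral_right) auto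
    then show ?thesis using next_coeffs[of s] \<open>l = k - 1 - s\<close> \<open>s \<le> k - 1\<close>
      by (simp add: f_def algebra_simps)
  qed
  then show ?thesis by (simp add: shift_coeff_def f_def)
qed

lemma shift_diff_bound:
  obtains M where "M \<ge> 0" "\<And>x y. \<bar>x\<bar> \<le> y \<Longrightarrow> 1 \<le> y \<Longrightarrow> \<bar>shift_diff x y\<bar> \<le> M * y ^ (k - 2)"
proof -
  have low_degree: "s + l \<le> k - 2" if "shift_coeff s l \<noteq> 0" for s l
    using shift_coeff_eq_0[of s l] that by linarith
  have "\<bar>shift_diff x y\<bar> \<le> (\<Sum>(s,l)\<in>{..k} \<times> {..k}. \<bar>shift_coeff s l\<bar>) * y ^ (k - 2)"
    if "\<bar>x\<bar> \<le> y" "1 \<le> y" for x y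
    unfolding shift_diff_expansion sum.cartesian_product
    using that low_degree by (intro abs_sum_monomials_le) auto
  moreover have "(\<Sum>(s,l)\<in>{..k} \<times> {..k}. \<bar>shift_coeff s l\<bar>) \<ge> 0"
    by (intro sum_nonneg) (simp add: case_prod_beta)
  ultimately show ?thesis using that by blast
qed


lemma q_increment_off_line:
  assumes "\<delta> > 0" "\<epsilon> > 0"
  obtains A where "A > 0"
    and "\<And>N n m. 1 \<le> real N \<Longrightarrow> 2 * \<bar>r\<bar> \<le> c * \<delta> * real N \<Longrightarrow> \<delta> * real N \<le> real n \<Longrightarrow>
           \<epsilon> \<le> \<bar>real m - (c * real n + r)\<bar> \<Longrightarrow>
           A * real N ^ (k - 1) \<le> \<bar>bpoly b (real m) (real N) - bpoly b (c * real n + r) (real N)\<bar>"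
proof -
  obtain i where i: "1 \<le> i" "i \<le> k" "b i (k - i) \<noteq> 0" by (rule Qk_lead_coeff)
  define A where "A = real (b i (k - i)) * \<epsilon> * (c * \<delta> / 2) ^ (i - 1)"
  have "A > 0" using i assms c_pos by (simp add: A_def)
  have "A * real N ^ (k - 1) \<le> \<bar>bpoly b (real m) (real N) - bpoly b (c * real n + r) (real N)\<bar>"
    if "1 \<le> real N" "2 * \<bar>r\<bar> \<le> c * \<delta> * real N" "\<delta> * real N \<le> real n"
      and m: "\<epsilon> \<le> \<bar>real m - (c * real n + r)\<bar>" for N n m :: nat
  proof -
    define t where "t = c * \<delta> * real N / 2"
    have "0 \<le> t" using c_pos assms by (simp add: t_def)
    have "c * (\<delta> * real N) \<le> c * real n" using that c_pos by (intro mult_left_mono) auto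
    then have "t \<le> c * real n + r" using that by (simp add: t_def field_simps)
    have "k - 1 = (i - 1) + (k - i)" using i by simp
    then have "A * real N ^ (k - 1) = real (b i (k - i)) * \<epsilon> * t ^ (i - 1) * real N ^ (k - i)"
      by (simp add: A_def t_def power_add power_mult_distrib[symmetric] mult_ac)
    also have "\<dots> \<le> real (b i (k - i)) * \<bar>real m - (c * real n + r)\<bar>
                     * max (real m) (c * real n + r) ^ (i - 1) * real N ^ (k - i)"
      using m \<open>0 \<le> t\<close> \<open>t \<le> c * real n + r\<close> \<open>\<epsilon> > 0\<close>
      by (intro mult_right_mono mult_left_mono mult_mono power_mono) auto
    also have "\<dots> \<le> \<bar>bpoly b (real m) (real N) - bpoly b (c * real n + r) (real N)\<bar>"
      using \<open>0 \<le> t\<close> \<open>t \<le> c * real n + r\<close> i by (intro abs_bpoly_diff_ge[OF fin_q]) auto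
    finally show ?thesis .
  qed
  then show ?thesis using that \<open>A > 0\<close> by blast
qed

lemma gap_off_line:
  assumes "\<delta> > 0" "\<epsilon> > 0"
  obtains W N0 where "W > 0"
    and "\<And>N n m. N > N0 \<Longrightarrow> \<delta> * real N \<le> real n \<Longrightarrow> n \<le> N \<Longrightarrow>
           \<epsilon> \<le> \<bar>real m - (c * real n + r)\<bar> \<Longrightarrow>
           W * real N ^ (k - 1) \<le> \<bar>bpoly b (real m) (real N) - bpoly a (real n) (real N)\<bar>"
proof -
  obtain A where "A > 0" and far: "\<And>N n m. 1 \<le> real N \<Longrightarrow> 2 * \<bar>r\<bar> \<le> c * \<delta> * real N \<Longrightarrow>
      \<delta> * real N \<le> real n \<Longrightarrow> \<epsilon> \<le> \<bar>real m - (c * real n + r)\<bar> \<Longrightarrow>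
      A * real N ^ (k - 1) \<le> \<bar>bpoly b (real m) (real N) - bpoly b (c * real n + r) (real N)\<bar>"
    using q_increment_off_line[OF assms] by blast
  obtain M where "M \<ge> 0"
    and near: "\<And>x y. \<bar>x\<bar> \<le> y \<Longrightarrow> 1 \<le> y \<Longrightarrow> \<bar>shift_diff x y\<bar> \<le> M * y ^ (k - 2)"
    using shift_diff_bound by blast
  define N0 where "N0 = nat \<lceil>2 * \<bar>r\<bar> / (c * \<delta>) + 2 * M / A\<rceil>"
  have "A / 2 * real N ^ (k - 1) \<le> \<bar>bpoly b (real m) (real N) - bpoly a (real n) (real N)\<bar>"
    if "N > N0" "\<delta> * real N \<le> real n" "n \<le> N" "\<epsilon> \<le> \<bar>real m - (c * real n + r)\<bar>" for N n m
  proof -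
    have "0 \<le> 2 * \<bar>r\<bar> / (c * \<delta>)" "0 \<le> 2 * M / A" using c_pos assms \<open>A > 0\<close> \<open>M \<ge> 0\<close> by auto
    moreover have "2 * \<bar>r\<bar> / (c * \<delta>) + 2 * M / A \<le> real N" using \<open>N > N0\<close> by (simp add: N0_def) linarith
    ultimately have "2 * \<bar>r\<bar> / (c * \<delta>) \<le> real N" "2 * M / A \<le> real N" by linarith+
    then have "2 * \<bar>r\<bar> \<le> c * \<delta> * real N" "2 * M \<le> real N * A" "1 \<le> real N"
      using \<open>N > N0\<close> c_pos assms \<open>A > 0\<close> by (auto simp: pos_divide_le_eq mult_ac)
    have "\<bar>shift_diff (real n) (real N)\<bar> \<le> M * real N ^ (k - 2)"
      using near[of "real n" "real N"] that \<open>1 \<le> real N\<close> by auto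
    also have "\<dots> \<le> (real N * A / 2) * real N ^ (k - 2)"
      using \<open>2 * M \<le> real N * A\<close> by (intro mult_right_mono) auto
    also have "\<dots> = A / 2 * real N ^ (k - 1)"
      using k_gt_1 by (simp add: power_Suc[symmetric] Suc_diff_Suc numeral_2_eq_2)
    finally have "\<bar>shift_diff (real n) (real N)\<bar> \<le> A / 2 * real N ^ (k - 1)" .
    moreover have "A * real N ^ (k - 1)
        \<le> \<bar>bpoly b (real m) (real N) - bpoly b (c * real n + r) (real N)\<bar>"
      using far that \<open>1 \<le> real N\<close> \<open>2 * \<bar>r\<bar> \<le> c * \<delta> * real N\<close> by blast
    moreover have "bpoly b (real m) (real N) - bpoly a (real n) (real N)
        = (bpoly b (real m) (real N) - bpoly b (c * real n + r) (real N)) + shift_diff (real n) (real N)"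
      by (simp add: shift_diff_def)
    ultimately show ?thesis by linarith
  qed
  then show ?thesis using that[of "A / 2" N0] \<open>A > 0\<close> by auto
qed

definition separated :: "real \<Rightarrow> bool" where
  "separated \<delta> \<longleftrightarrow> (\<exists>\<epsilon>>0. \<exists>C>0. \<exists>N1::nat. \<exists>\<Gamma>::nat \<Rightarrow> nat set.
     (\<forall>N. \<Gamma> N \<subseteq> {1..N} \<and> real (card (\<Gamma> N)) \<le> \<delta> * real N) \<and>
     (\<forall>N>N1. \<forall>n. \<delta> * real N \<le> real n \<and> n \<le> N \<and> n \<notin> \<Gamma> N \<longrightarrow>
        (\<forall>m::nat. \<epsilon> \<le> \<bar>real m - (c * real n + r)\<bar> \<or>
           (real m = c * real n + r \<and> C * real N \<le> \<bar>shift_diff (real n) (real N)\<bar>))))"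

lemma exploding_if_separated:
  assumes "\<And>\<delta>. 0 < \<delta> \<Longrightarrow> \<delta> < 1 \<Longrightarrow> separated \<delta>"
  shows "exploding b a"
  unfolding exploding_def
proof (intro allI impI)
  fix \<delta> :: real assume \<delta>: "0 < \<delta> \<and> \<delta> < 1"
  obtain \<epsilon> C N1 \<Gamma> where "\<epsilon> > 0" "C > 0"
    and \<Gamma>: "\<forall>N. \<Gamma> N \<subseteq> {1..N} \<and> real (card (\<Gamma> N)) \<le> \<delta> * real N"
    and sep: "\<forall>N>N1. \<forall>n. \<delta> * real N \<le> real n \<and> n \<le> N \<and> n \<notin> \<Gamma> N \<longrightarrow>
        (\<forall>m::nat. \<epsilon> \<le> \<bar>real m - (c * real n + r)\<bar> \<or>
           (real m = c * real n + r \<and> C * real N \<le> \<bar>shift_diff (real n) (real N)\<bar>))"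
    using assms[of \<delta>] \<delta> unfolding separated_def by blast
  obtain W N2 where "W > 0" and gap: "\<And>N n m. N > N2 \<Longrightarrow> \<delta> * real N \<le> real n \<Longrightarrow> n \<le> N \<Longrightarrow>
      \<epsilon> \<le> \<bar>real m - (c * real n + r)\<bar> \<Longrightarrow>
      W * real N ^ (k - 1) \<le> \<bar>bpoly b (real m) (real N) - bpoly a (real n) (real N)\<bar>"
    using gap_off_line[of \<delta> \<epsilon>] \<delta> \<open>\<epsilon> > 0\<close> by blast
  have "min C W * real N \<le> \<bar>bpoly b (real m) (real N) - bpoly a (real n) (real N)\<bar>"
    if N: "N > max N1 N2" and n: "\<delta> * real N \<le> real n" "n \<le> N" "n \<notin> \<Gamma> N" for N n m
  proof -
    have "real N ^ 1 \<le> real N ^ (k - 1)" using N k_gt_1 by (intro power_increasing) auto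
    then have "min C W * real N \<le> W * real N ^ (k - 1)"
      using \<open>W > 0\<close> by (intro mult_mono) auto
    moreover have "min C W * real N \<le> C * real N" by (intro mult_right_mono) auto
    show ?thesis
    proof (cases "\<epsilon> \<le> \<bar>real m - (c * real n + r)\<bar>")
      case True
      then have "W * real N ^ (k - 1) \<le> \<bar>bpoly b (real m) (real N) - bpoly a (real n) (real N)\<bar>"
        using gap N n by auto
      with \<open>min C W * real N \<le> W * real N ^ (k - 1)\<close> show ?thesis by linarith
    next
      case False
      then have "real m = c * real n + r" "C * real N \<le> \<bar>shift_diff (real n) (real N)\<bar>"
        using sep N n by auto
      then have "C * real N \<le> \<bar>bpoly b (real m) (real N) - bpoly a (real n) (real N)\<bar>"
        by (simp add: shift_diff_def mult.commute)
      with \<open>min C W * real N \<le> C * real N\<close> show ?thesis by linarith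
    qed
  qed
  then show "\<exists>C>0. \<exists>N0::nat. \<exists>\<Gamma>::nat \<Rightarrow> nat set.
      (\<forall>N. \<Gamma> N \<subseteq> {1..N} \<and> real (card (\<Gamma> N)) \<le> \<delta> * real N) \<and>
      (\<forall>N>N0. \<forall>n::nat. \<delta> * real N \<le> real n \<and> n \<le> N \<and> n \<notin> \<Gamma> N \<longrightarrow>
         (\<forall>m::nat. \<delta> * real N \<le> real m \<and> m \<le> N \<longrightarrow>
            \<bar>bpoly b (real m) (real N) - bpoly a (real n) (real N)\<bar> \<ge> C * real N))"
    using \<Gamma> \<open>C > 0\<close> \<open>W > 0\<close>
    by (intro exI[of _ "min C W"] conjI exI[of _ "max N1 N2"] exI[of _ \<Gamma>]) auto
qed

lemma separated_if_far_from_int: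
  assumes "\<epsilon> > 0" and \<Gamma>: "\<And>N. \<Gamma> N \<subseteq> {1..N} \<and> real (card (\<Gamma> N)) \<le> \<delta> * real N"
    and far: "\<And>N n m. N > N1 \<Longrightarrow> \<delta> * real N \<le> real n \<Longrightarrow> n \<le> N \<Longrightarrow> n \<notin> \<Gamma> N \<Longrightarrow>
                \<epsilon> \<le> \<bar>c * real n + r - of_int m\<bar>"
  shows "separated \<delta>"
proof -
  have "\<epsilon> \<le> \<bar>real m - (c * real n + r)\<bar>"
    if "N > N1" "\<delta> * real N \<le> real n" "n \<le> N" "n \<notin> \<Gamma> N" for N n m :: nat
    using far[OF that, of "int m"] by (simp add: abs_minus_commute)
  then show ?thesis
    unfolding separated_def using \<open>\<epsilon> > 0\<close> \<Gamma>
    by (intro exI[of _ \<epsilon>] conjI exI[of _ 1] exI[of _ N1] exI[of _ \<Gamma>]) auto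
qed

lemma separated_if_irrational_slope:
  assumes "c \<notin> \<rat>" and "\<delta> > 0"
  shows "separated \<delta>"
proof -
  obtain \<epsilon> N1 where "\<epsilon> > 0" and card: "\<And>N. N \<ge> N1 \<Longrightarrow>
      real (card {n\<in>{1..N}. \<exists>m::int. \<bar>c * real n + r - of_int m\<bar> < \<epsilon>}) \<le> \<delta> * real N"
    using card_near_int_irrational_le[OF assms] by blast
  obtain \<Gamma> where \<Gamma>: "\<And>N. \<Gamma> N \<subseteq> {1..N} \<and> real (card (\<Gamma> N)) \<le> \<delta> * real N"
    and off: "\<And>N n. N \<ge> N1 \<Longrightarrow> n \<in> {1..N} \<Longrightarrow> n \<notin> \<Gamma> N \<Longrightarrow>
                \<not> (\<exists>m::int. \<bar>c * real n + r - of_int m\<bar> < \<epsilon>)"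
    using sparse_family_of_card_le[OF card less_imp_le[OF \<open>\<delta> > 0\<close>]] by blast
  show ?thesis
  proof (rule separated_if_far_from_int[OF \<open>\<epsilon> > 0\<close> \<Gamma>])
    fix N n :: nat and m :: int
    assume "N > N1" "\<delta> * real N \<le> real n" "n \<le> N" "n \<notin> \<Gamma> N"
    moreover have "0 < \<delta> * real N" using \<open>\<delta> > 0\<close> \<open>N > N1\<close> by simp
    then have "n \<ge> 1" using \<open>\<delta> * real N \<le> real n\<close> by simp
    ultimately have "\<not> \<bar>c * real n + r - of_int m\<bar> < \<epsilon>" using off[of N n] \<open>n \<ge> 1\<close> by auto
    then show "\<epsilon> \<le> \<bar>c * real n + r - of_int m\<bar>" by simp
  qed
qed

lemma separated_if_irrational_offset:
  assumes "c \<in> \<rat>" and "r \<notin> \<rat>" and "\<delta> > 0"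
  shows "separated \<delta>"
proof -
  obtain \<epsilon> where "\<epsilon> > 0" and "\<And>n::nat. \<And>m::int. \<epsilon> \<le> \<bar>c * real n + r - of_int m\<bar>"
    using far_from_int_rational_irrational[OF assms(1,2)] by blast
  then show ?thesis using \<open>\<delta> > 0\<close> by (intro separated_if_far_from_int[of \<epsilon> "\<lambda>_. {}"]) auto
qed

lemma separated_if_shift_diff_nonconstant:
  assumes "c \<in> \<rat>" "r \<in> \<rat>" and "\<delta> > 0"
    and nonconst: "(s,l) \<in> {..k} \<times> {..k}" "(s,l) \<noteq> (0,0)" "shift_coeff s l \<noteq> 0"
  shows "separated \<delta>"
proof -
  obtain h :: "real poly" and j M where "h \<noteq> 0" "j \<ge> 1" "M \<ge> 0"
    and lead: "\<And>x y. \<bar>x\<bar> \<le> y \<Longrightarrow> 1 \<le> y \<Longrightarrow> \<bar>shift_diff x y - y ^ j * poly h (x / y)\<bar> \<le> M * y ^ (j - 1)"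
    using leading_homogeneous_part[of "{..k} \<times> {..k}" s l shift_coeff] nonconst
    unfolding shift_diff_expansion sum.cartesian_product by auto
  obtain \<epsilon>h N1 where "\<epsilon>h > 0" and card: "\<And>N. N \<ge> N1 \<Longrightarrow>
      real (card {n\<in>{1..N}. \<bar>poly h (real n / real N)\<bar> < \<epsilon>h}) \<le> \<delta> * real N"
    using card_small_poly_values_le[OF \<open>h \<noteq> 0\<close> \<open>\<delta> > 0\<close>] by blast
  obtain \<Gamma> where \<Gamma>: "\<And>N. \<Gamma> N \<subseteq> {1..N} \<and> real (card (\<Gamma> N)) \<le> \<delta> * real N"
    and off: "\<And>N n. N \<ge> N1 \<Longrightarrow> n \<in> {1..N} \<Longrightarrow> n \<notin> \<Gamma> N \<Longrightarrow> \<not> \<bar>poly h (real n / real N)\<bar> < \<epsilon>h"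
    using sparse_family_of_card_le[OF card less_imp_le[OF \<open>\<delta> > 0\<close>]] by blast
  obtain \<epsilon> where "\<epsilon> > 0"
    and gap: "\<And>n::nat. \<And>m::int. of_int m = c * real n + r \<or> \<epsilon> \<le> \<bar>c * real n + r - of_int m\<bar>"
    using int_gap_rational_affine[OF assms(1,2)] by blast
  define N2 where "N2 = max N1 (nat \<lceil>2 * M / \<epsilon>h\<rceil>)"
  have large: "\<epsilon>h / 2 * real N \<le> \<bar>shift_diff (real n) (real N)\<bar>"
    if "N > N2" "\<delta> * real N \<le> real n" "n \<le> N" "n \<notin> \<Gamma> N" for N n
  proof (rule abs_ge_if_leading_term_dominates)
    show "1 \<le> real N" using \<open>N > N2\<close> by simp
    have "2 * M / \<epsilon>h \<le> real N" using \<open>N > N2\<close> unfolding N2_def by linarith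
    then show "2 * M \<le> \<epsilon>h * real N" using \<open>\<epsilon>h > 0\<close> by (simp add: pos_divide_le_eq mult.commute)
    have "0 < \<delta> * real N" using \<open>\<delta> > 0\<close> \<open>1 \<le> real N\<close> by simp
    then have "n \<ge> 1" using \<open>\<delta> * real N \<le> real n\<close> by simp
    then show "\<epsilon>h \<le> \<bar>poly h (real n / real N)\<bar>" using off[of N n] that by (auto simp: N2_def)
    show "\<bar>shift_diff (real n) (real N) - real N ^ j * poly h (real n / real N)\<bar> \<le> M * real N ^ (j - 1)"
      using lead[of "real n" "real N"] that \<open>1 \<le> real N\<close> by auto
  qed fact+
  show ?thesis
    unfolding separated_def
  proof (intro exI conjI allI impI)
    show "\<epsilon> > 0" "\<epsilon>h / 2 > 0" using \<open>\<epsilon> > 0\<close> \<open>\<epsilon>h > 0\<close> by auto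
    show "\<Gamma> N \<subseteq> {1..N}" "real (card (\<Gamma> N)) \<le> \<delta> * real N" for N using \<Gamma> by auto
  next
    fix N n m :: nat
    assume "N > N2" "\<delta> * real N \<le> real n \<and> n \<le> N \<and> n \<notin> \<Gamma> N"
    then show "\<epsilon> \<le> \<bar>real m - (c * real n + r)\<bar> \<or>
        (real m = c * real n + r \<and> \<epsilon>h / 2 * real N \<le> \<bar>shift_diff (real n) (real N)\<bar>)"
      using gap[where n=n and m="int m"] large[of N n] by (auto simp: abs_minus_commute)
  qed
qed

lemma shift_diff_eq_const:
  assumes "\<And>s l. (s,l) \<in> {..k} \<times> {..k} \<Longrightarrow> (s,l) \<noteq> (0,0) \<Longrightarrow> shift_coeff s l = 0"
  shows "shift_diff x y = shift_coeff 0 0"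
proof -
  have "shift_diff x y = (\<Sum>(s,l)\<in>{(0,0)}. shift_coeff s l * x ^ s * y ^ l)"
    unfolding shift_diff_expansion sum.cartesian_product
  proof (rule sum.mono_neutral_right)
    show "\<forall>p\<in>{..k} \<times> {..k} - {(0,0)}. (case p of (s,l) \<Rightarrow> shift_coeff s l * x ^ s * y ^ l) = 0"
    proof
      fix p assume p: "p \<in> {..k} \<times> {..k} - {(0,0)}"
      moreover obtain s l where "p = (s,l)" by fastforce
      ultimately show "(case p of (s,l) \<Rightarrow> shift_coeff s l * x ^ s * y ^ l) = 0"
        using assms[of s l] by simp
    qed
  qed auto
  then show ?thesis by simp
qed

lemma Q_equivalent_if_shift_diff_constant:
  assumes "c \<in> \<rat>" "r \<in> \<rat>"
    and const: "\<And>s l. (s,l) \<in> {..k} \<times> {..k} \<Longrightarrow> (s,l) \<noteq> (0,0) \<Longrightarrow> shift_coeff s l = 0"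
  shows "\<exists>d::real.
        (\<forall>x N::real. bpoly b (c * x + r) N - bpoly a x N = d) \<and>
        (\<forall>\<delta>::real. 0 < \<delta> \<and> \<delta> < 1 \<longrightarrow>
           (\<exists>W>0. \<exists>N0::nat. \<forall>N::nat. N > N0 \<longrightarrow>
              (\<forall>n::nat. \<delta> * real N \<le> real n \<and> n \<le> N \<longrightarrow>
                 (\<forall>m::nat.
                    (real m = c * real n + r \<and>
                       bpoly b (real m) (real N) - bpoly a (real n) (real N) = d) \<or>
                    \<bar>bpoly b (real m) (real N) - bpoly a (real n) (real N)\<bar>
                       \<ge> W * real N ^ (k - 1)))))"
proof -
  have const_diff: "bpoly b (c * x + r) y - bpoly a x y = shift_coeff 0 0" for x y
    using shift_diff_eq_const[OF const] by (simp add: shift_diff_def)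
  obtain \<epsilon> where "\<epsilon> > 0"
    and gap: "\<And>n::nat. \<And>m::int. of_int m = c * real n + r \<or> \<epsilon> \<le> \<bar>c * real n + r - of_int m\<bar>"
    using int_gap_rational_affine[OF assms(1,2)] by blast
  have "\<exists>W>0. \<exists>N0::nat. \<forall>N::nat. N > N0 \<longrightarrow>
      (\<forall>n::nat. \<delta> * real N \<le> real n \<and> n \<le> N \<longrightarrow>
         (\<forall>m::nat. (real m = c * real n + r \<and>
               bpoly b (real m) (real N) - bpoly a (real n) (real N) = shift_coeff 0 0) \<or>
            \<bar>bpoly b (real m) (real N) - bpoly a (real n) (real N)\<bar> \<ge> W * real N ^ (k - 1)))"
    if \<delta>: "0 < \<delta>" for \<delta>
  proof -
    obtain W N0 where "W > 0" and far: "\<And>N n m. N > N0 \<Longrightarrow> \<delta> * real N \<le> real n \<Longrightarrow> n \<le> N \<Longrightarrow>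
        \<epsilon> \<le> \<bar>real m - (c * real n + r)\<bar> \<Longrightarrow>
        W * real N ^ (k - 1) \<le> \<bar>bpoly b (real m) (real N) - bpoly a (real n) (real N)\<bar>"
      using gap_off_line[OF \<delta> \<open>\<epsilon> > 0\<close>] by blast
    have "(real m = c * real n + r \<and>
             bpoly b (real m) (real N) - bpoly a (real n) (real N) = shift_coeff 0 0) \<or>
          \<bar>bpoly b (real m) (real N) - bpoly a (real n) (real N)\<bar> \<ge> W * real N ^ (k - 1)"
      if "N > N0" "\<delta> * real N \<le> real n" "n \<le> N" for N n m :: nat
    proof (cases "real m = c * real n + r")
      case True
      then show ?thesis using const_diff[of "real n" "real N"] by (simp add: mult.commute)
    next
      case False
      then have "\<epsilon> \<le> \<bar>real m - (c * real n + r)\<bar>"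
        using gap[where n=n and m="int m"] by (auto simp: abs_minus_commute)
      then show ?thesis using far[OF that] by simp
    qed
    then show ?thesis using \<open>W > 0\<close> by blast
  qed
  then show ?thesis using const_diff by blast
qed

lemma exploding_if_not_Q_equivalent:
  assumes "\<not> (c \<in> \<rat> \<and> r \<in> \<rat> \<and>
              (\<forall>s l. (s,l) \<in> {..k} \<times> {..k} \<longrightarrow> (s,l) \<noteq> (0,0) \<longrightarrow> shift_coeff s l = 0))"
  shows "exploding b a"
proof (rule exploding_if_separated)
  fix \<delta> :: real assume "0 < \<delta>"
  consider "c \<notin> \<rat>" | "c \<in> \<rat>" "r \<notin> \<rat>"
    | s l where "c \<in> \<rat>" "r \<in> \<rat>" "(s,l) \<in> {..k} \<times> {..k}" "(s,l) \<noteq> (0,0)" "shift_coeff s l \<noteq> 0"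
    using assms by blast
  then show "separated \<delta>"
  proof cases
    case 1
    then show ?thesis using separated_if_irrational_slope \<open>0 < \<delta>\<close> by blast
  next
    case 2
    then show ?thesis using separated_if_irrational_offset \<open>0 < \<delta>\<close> by blast
  next
    case 3
    then show ?thesis using separated_if_shift_diff_nonconstant \<open>0 < \<delta>\<close> by blast
  qed
qed

end

theorem mainTheorem5:
  fixes a b :: "nat \<Rightarrow> nat \<Rightarrow> nat" and k :: nat and c r :: real
  assumes fin_p: "finite (bsupp a)" and fin_q: "finite (bsupp b)"
    and k: "k > 1" and deg_p: "bdeg a = k" and deg_q: "bdeg b = k"
    and nonN_p: "\<exists>i l. i > 0 \<and> a i l \<noteq> 0"
    and nonN_q: "\<exists>i l. i > 0 \<and> b i l \<noteq> 0"
    and Pk_nc: "degree (hcomp a k) > 0" and Qk_nc: "degree (hcomp b k) > 0"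
    and Q0P0: "poly (hcomp b k) 0 \<le> poly (hcomp a k) 0"
    and gam_lin: "\<forall>y::real. 0 < y \<and> y \<le> 1 \<longrightarrow> gam a b k y = c * y"
    and R_const: "\<forall>y::real. 0 < y \<and> y \<le> 1 \<longrightarrow> Rk a b k y = r"
  shows "exploding b a \<or>
    (c \<in> \<rat> \<and> r \<in> \<rat> \<and>
     (\<exists>d::real.
        (\<forall>x N::real. bpoly b (c * x + r) N - bpoly a x N = d) \<and>
        (\<forall>\<delta>::real. 0 < \<delta> \<and> \<delta> < 1 \<longrightarrow>
           (\<exists>W>0. \<exists>N0::nat. \<forall>N::nat. N > N0 \<longrightarrow>
              (\<forall>n::nat. \<delta> * real N \<le> real n \<and> n \<le> N \<longrightarrow>
                 (\<forall>m::nat.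
                    (real m = c * real n + r \<and>
                       bpoly b (real m) (real N) - bpoly a (real n) (real N) = d) \<or>
                    \<bar>bpoly b (real m) (real N) - bpoly a (real n) (real N)\<bar>
                       \<ge> W * real N ^ (k - 1)))))))"
proof -
  interpret linear_gamma a b k c r
    using assms by unfold_locales auto
  show ?thesis
  proof (cases "c \<in> \<rat> \<and> r \<in> \<rat> \<and>
      (\<forall>s l. (s,l) \<in> {..k} \<times> {..k} \<longrightarrow> (s,l) \<noteq> (0,0) \<longrightarrow> shift_coeff s l = 0)")
    case True
    then show ?thesis by (intro disjI2 conjI Q_equivalent_if_shift_diff_constant) auto
  next
    case False
    then show ?thesis by (intro disjI1 exploding_if_not_Q_equivalent)
  qed
qed

end
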